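(* Let $\Gamma=(V,E)$ be a locally finite reflexive relation and $v\in V$. If $F_1$ and $F_2$ are $v$-fragments, then $F_1\cap F_2$ and $F_1\cup F_2$ are $v$-fragments. In particular, there exists a $v$-fragment contained in every $v$-fragment.
   Context: A relation is a pair $\Gamma=(V,E)$ with $E\subset V\times V$; for $X\subset V$, $\Gamma(X)=\{y: (x,y)\in E \text{ for some } x\in X\}$, $\Gamma^-(X)=\{y:(y,x)\in E\text{ for some }x\in X\}$, $\Gamma(x)=\Gamma(\{x\})$. $\Gamma$ is reflexive if $(x,x)\in E$ for all $x$, and locally finite if $\Gamma(x)$ and $\Gamma^-(x)$ are finite for all $x$. Write $\partial(X)=\Gamma(X)\setminus X$. A set $F\subset V$ is a $v$-Moser set if $\Gamma^-(v)\cap F=\{v\}$. Let $\kappa_\Gamma(v)=\min\{|\partial(X)|: X \text{ a } v\text{-Moser set}\}$. A $v$-fragment is a $v$-Moser set $X$ with $|\partial(X)|=\kappa_\Gamma(v)$. *)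

theory Defs
  imports Main
begin

definition out_nbhd :: "('a \<times> 'a) set \<Rightarrow> 'a set \<Rightarrow> 'a set" where
  "out_nbhd E X = {y. \<exists>x\<in>X. (x, y) \<in> E}"

definition in_nbhd :: "('a \<times> 'a) set \<Rightarrow> 'a set \<Rightarrow> 'a set" where
  "in_nbhd E X = {y. \<exists>x\<in>X. (y, x) \<in> E}"

definition reflexive_rel :: "'a set \<Rightarrow> ('a \<times> 'a) set \<Rightarrow> bool" where
  "reflexive_rel V E \<longleftrightarrow> (\<forall>x\<in>V. (x, x) \<in> E)"

definition locally_finite :: "'a set \<Rightarrow> ('a \<times> 'a) set \<Rightarrow> bool" where
  "locally_finite V E \<longleftrightarrow>
     (\<forall>x\<in>V. finite (out_nbhd E {x}) \<and> finite (in_nbhd E {x}))"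

definition bdry :: "('a \<times> 'a) set \<Rightarrow> 'a set \<Rightarrow> 'a set" where
  "bdry E X = out_nbhd E X - X"

definition moser_set :: "'a set \<Rightarrow> ('a \<times> 'a) set \<Rightarrow> 'a \<Rightarrow> 'a set \<Rightarrow> bool" where
  "moser_set V E v F \<longleftrightarrow> F \<subseteq> V \<and> in_nbhd E {v} \<inter> F = {v}"

text \<open>Since {v} is a
  v-Moser set with finite boundary (local finiteness), the minimum cardinality is
  attained by a set with finite boundary, so we minimise over those.\<close>
definition kappa :: "'a set \<Rightarrow> ('a \<times> 'a) set \<Rightarrow> 'a \<Rightarrow> nat" where
  "kappa V E v = (LEAST k. \<exists>X. moser_set V E v X \<and> finite (bdry E X) \<and> card (bdry E X) = k)"

definition fragment :: "'a set \<Rightarrow> ('a \<times> 'a) set \<Rightarrow> 'a \<Rightarrow> 'a set \<Rightarrow> bool" where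
  "fragment V E v X \<longleftrightarrow> moser_set V E v X \<and> finite (bdry E X) \<and> card (bdry E X) = kappa V E v"

end

theory Submission
  imports Defs
begin

text \<open>The boundary is submodular, |\<partial>(X \<inter> Y)| + |\<partial>(X \<union> Y)| \<le> |\<partial>X| + |\<partial>Y|, and intersections
  and unions of v-Moser sets are again v-Moser sets; since neither boundary can drop below
  \<kappa>(v), both must equal \<kappa>(v) when X and Y are fragments. For the least fragment take the
  intersection K of all fragments: every finite set of points of \<partial>K already lies in the
  boundary of a finite intersection of fragments, which is a fragment, so \<partial>K is finite of
  size at most \<kappa>(v).\<close>

lemma card_bdry_Int_Un_le:
  assumes fX: "finite (bdry E X)" and fY: "finite (bdry E Y)"
  shows "finite (bdry E (X \<inter> Y))" "finite (bdry E (X \<union> Y))"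
    "card (bdry E (X \<inter> Y)) + card (bdry E (X \<union> Y)) \<le> card (bdry E X) + card (bdry E Y)"
proof -
  let ?A = "bdry E (X \<inter> Y)" and ?B = "bdry E (X \<union> Y)"
  have Un_sub: "?A \<union> ?B \<subseteq> bdry E X \<union> bdry E Y"
    and Int_sub: "?A \<inter> ?B \<subseteq> bdry E X \<inter> bdry E Y"
    unfolding bdry_def out_nbhd_def by blast+
  show fA: "finite ?A" and fB: "finite ?B"
    using Un_sub fX fY by (meson finite_UnI finite_subset le_sup_iff)+
  have "card ?A + card ?B = card (?A \<union> ?B) + card (?A \<inter> ?B)"
    using card_Un_Int[OF fA fB] .
  also have "\<dots> \<le> card (bdry E X \<union> bdry E Y) + card (bdry E X \<inter> bdry E Y)"
    using Un_sub Int_sub fX fY by (intro add_mono card_mono) auto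
  also have "\<dots> = card (bdry E X) + card (bdry E Y)"
    using card_Un_Int[OF fX fY] by simp
  finally show "card ?A + card ?B \<le> card (bdry E X) + card (bdry E Y)" .
qed

lemma moser_set_Inter:
  assumes "\<F> \<noteq> {}" and "\<And>X. X \<in> \<F> \<Longrightarrow> moser_set V E v X"
  shows "moser_set V E v (\<Inter>\<F>)"
  using assms unfolding moser_set_def by blast

lemma moser_set_Int:
  assumes "moser_set V E v X" and "moser_set V E v Y"
  shows "moser_set V E v (X \<inter> Y)"
  using assms unfolding moser_set_def by blast

lemma moser_set_Un:
  assumes "moser_set V E v X" and "moser_set V E v Y"
  shows "moser_set V E v (X \<union> Y)"
  using assms unfolding moser_set_def by blast

lemma kappa_le_card_bdry:
  assumes "moser_set V E v X" and "finite (bdry E X)"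
  shows "kappa V E v \<le> card (bdry E X)"
  unfolding kappa_def by (rule Least_le) (use assms in blast)

lemma fragment_moser_set: "fragment V E v X \<Longrightarrow> moser_set V E v X"
  unfolding fragment_def by simp

lemma fragment_Int_Un:
  assumes X: "fragment V E v X" and Y: "fragment V E v Y"
  shows "fragment V E v (X \<inter> Y)" "fragment V E v (X \<union> Y)"
proof -
  have mI: "moser_set V E v (X \<inter> Y)"
    using X Y by (intro moser_set_Int fragment_moser_set)
  have mU: "moser_set V E v (X \<union> Y)"
    using X Y by (intro moser_set_Un fragment_moser_set)
  have fX: "finite (bdry E X)" "card (bdry E X) = kappa V E v"
    and fY: "finite (bdry E Y)" "card (bdry E Y) = kappa V E v"
    using X Y unfolding fragment_def by auto
  note sub = card_bdry_Int_Un_le[OF fX(1) fY(1)]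
  have "card (bdry E (X \<inter> Y)) = kappa V E v" "card (bdry E (X \<union> Y)) = kappa V E v"
    using kappa_le_card_bdry[OF mI sub(1)] kappa_le_card_bdry[OF mU sub(2)] sub(3) fX(2) fY(2)
    by linarith+
  then show "fragment V E v (X \<inter> Y)" "fragment V E v (X \<union> Y)"
    using sub(1,2) mI mU unfolding fragment_def by auto
qed

lemma fragment_exists:
  assumes "v \<in> V" and "(v, v) \<in> E" and "finite (out_nbhd E {v})"
  shows "\<exists>F. fragment V E v F"
proof -
  have m: "moser_set V E v {v}"
    using assms(1,2) unfolding moser_set_def in_nbhd_def by auto
  have f: "finite (bdry E {v})"
    using assms(3) unfolding bdry_def by simp
  have "\<exists>X. moser_set V E v X \<and> finite (bdry E X) \<and> card (bdry E X) = kappa V E v"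
    unfolding kappa_def by (rule LeastI_ex) (use m f in blast)
  then show ?thesis unfolding fragment_def .
qed

lemma fragment_Inter_finite:
  assumes "finite \<F>" and "\<F> \<noteq> {}" and "\<And>X. X \<in> \<F> \<Longrightarrow> fragment V E v X"
  shows "fragment V E v (\<Inter>\<F>)"
  using assms
proof (induction \<F> rule: finite_ne_induct)
  case (insert X \<F>)
  then show ?case by (simp add: fragment_Int_Un(1))
qed simp

lemma finite_subset_bdry_Inter_fragments:
  assumes F0: "fragment V E v F0"
    and S: "finite S" "S \<subseteq> bdry E (\<Inter>{F. fragment V E v F})"
  shows "\<exists>G. fragment V E v G \<and> S \<subseteq> bdry E G"
proof -
  have "\<forall>z\<in>S. \<exists>F. fragment V E v F \<and> z \<notin> F"
    using S(2) unfolding bdry_def by blast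
  then obtain f where f: "\<And>z. z \<in> S \<Longrightarrow> fragment V E v (f z) \<and> z \<notin> f z"
    by metis
  define G where "G = \<Inter>(insert F0 (f ` S))"
  have G: "fragment V E v G"
    unfolding G_def using S(1) F0 f by (intro fragment_Inter_finite) auto
  have "S \<subseteq> out_nbhd E G"
    using S(2) Inter_lower[of G "{F. fragment V E v F}"] G
    unfolding bdry_def out_nbhd_def by blast
  moreover have "S \<inter> G = {}"
    unfolding G_def using f by blast
  ultimately show ?thesis
    using G unfolding bdry_def by blast
qed

lemma fragment_Inter_fragments:
  assumes F0: "fragment V E v F0"
  shows "fragment V E v (\<Inter>{F. fragment V E v F})"
proof -
  let ?K = "\<Inter>{F. fragment V E v F}"
  have mK: "moser_set V E v ?K"
    using F0 by (intro moser_set_Inter) (auto intro: fragment_moser_set)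
  have "card S \<le> kappa V E v" if S: "S \<subseteq> bdry E ?K" "finite S" for S
  proof -
    obtain G where G: "fragment V E v G" and "S \<subseteq> bdry E G"
      using finite_subset_bdry_Inter_fragments[OF F0 S(2,1)] by blast
    moreover have "finite (bdry E G)" "card (bdry E G) = kappa V E v"
      using G unfolding fragment_def by simp_all
    ultimately show ?thesis
      using card_mono by metis
  qed
  then have "finite (bdry E ?K) \<and> card (bdry E ?K) \<le> kappa V E v"
    by (rule finite_if_finite_subsets_card_bdd)
  with kappa_le_card_bdry[OF mK] mK show ?thesis
    unfolding fragment_def by simp
qed

theorem lemma4p1:
  fixes V :: "'a set" and E :: "('a \<times> 'a) set" and v :: 'a
  assumes "E \<subseteq> V \<times> V"
    and "reflexive_rel V E"
    and "locally_finite V E"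
    and "v \<in> V"
  shows "(\<forall>F1 F2. fragment V E v F1 \<and> fragment V E v F2 \<longrightarrow>
            fragment V E v (F1 \<inter> F2) \<and> fragment V E v (F1 \<union> F2))
         \<and> (\<exists>F0. fragment V E v F0 \<and> (\<forall>F. fragment V E v F \<longrightarrow> F0 \<subseteq> F))"
proof -
  obtain F0 where "fragment V E v F0"
    using fragment_exists[of v V E] assms(2-4)
    unfolding reflexive_rel_def locally_finite_def by blast
  then have "fragment V E v (\<Inter>{F. fragment V E v F})"
    by (rule fragment_Inter_fragments)
  then show ?thesis
    using fragment_Int_Un by (intro conjI allI impI exI) (auto intro: Inter_lower)
qed

end
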